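(* Let $C\subset\mathbb P^n_K$ be a projective curve (closed subscheme of dimension $1$) over an algebraically closed field $K$ whose $h$-vector is positive. Then the arithmetic genus $g$ of $C$ is non-negative.
   Context: Let $S=K[x_0,\dots,x_n]$ and $I$ the saturated ideal of $C$. The Hilbert series $\sum_t\dim_K(S/I)_tz^t$ equals $h(z)/(1-z)^2$ with $h(z)=h_0+\dots+h_sz^s$, $h_s\ne0$; $(h_0,\dots,h_s)$ is the $h$-vector, positive if $h_i>0$ for all $i$. The Hilbert polynomial of $C$ is $P_C(t)=\deg(C)\,t+1-g$, which defines the arithmetic genus $g$. *)

theory Defs
  imports "HOL-Library.Poly_Mapping" "HOL-Computational_Algebra.Computational_Algebra"
begin

text \<open>Polynomial ring S = K[x_v | v in 'v] (the variables indexed by a finite type 'v,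
  so n + 1 = CARD('v)): polynomials are finitely supported maps from monomials
  (exponent vectors 'v =>0 nat) to coefficients.\<close>

type_synonym ('v, 'a) mpoly = "('v \<Rightarrow>\<^sub>0 nat) \<Rightarrow>\<^sub>0 'a"

definition mdeg :: "('v \<Rightarrow>\<^sub>0 nat) \<Rightarrow> nat" where
  "mdeg \<mu> = (\<Sum>v\<in>Poly_Mapping.keys \<mu>. Poly_Mapping.lookup \<mu> v)"

definition kscale :: "'a::comm_ring_1 \<Rightarrow> ('v, 'a) mpoly \<Rightarrow> ('v, 'a) mpoly" where
  "kscale c p = Poly_Mapping.single 0 c * p"

definition hom_piece :: "nat \<Rightarrow> ('v, 'a::comm_ring_1) mpoly set" where
  "hom_piece t = {p. \<forall>\<mu>\<in>Poly_Mapping.keys p. mdeg \<mu> = t}"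

definition hom_comp :: "nat \<Rightarrow> ('v, 'a::comm_ring_1) mpoly \<Rightarrow> ('v, 'a) mpoly" where
  "hom_comp t p = (\<Sum>\<mu>\<in>{\<mu>\<in>Poly_Mapping.keys p. mdeg \<mu> = t}. Poly_Mapping.single \<mu> (Poly_Mapping.lookup p \<mu>))"

definition is_ideal :: "('v, 'a::comm_ring_1) mpoly set \<Rightarrow> bool" where
  "is_ideal I \<longleftrightarrow> 0 \<in> I \<and> (\<forall>p\<in>I. \<forall>q\<in>I. p + q \<in> I) \<and> (\<forall>p\<in>I. \<forall>q. q * p \<in> I)"

definition is_hom_ideal :: "('v, 'a::comm_ring_1) mpoly set \<Rightarrow> bool" where
  "is_hom_ideal I \<longleftrightarrow> is_ideal I \<and> (\<forall>p\<in>I. \<forall>t. hom_comp t p \<in> I)"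

text \<open>Saturation with respect to the irrelevant ideal m = (x_0,...,x_n):
  I : m^\<infinity> = {f. \<exists>k. m^k f \<subseteq> I}; m^k is generated by the monomials of degree k.\<close>
definition saturation :: "('v, 'a::comm_ring_1) mpoly set \<Rightarrow> ('v, 'a) mpoly set" where
  "saturation I = {f. \<exists>k. \<forall>\<mu>. mdeg \<mu> = k \<longrightarrow> Poly_Mapping.single \<mu> 1 * f \<in> I}"

definition saturated :: "('v, 'a::comm_ring_1) mpoly set \<Rightarrow> bool" where
  "saturated I \<longleftrightarrow> saturation I = I"

text \<open>Hilbert function t \<mapsto> dim_K (S/I)_t = dim_K S_t - dim_K I_t.\<close>
definition hilb :: "('v, 'a::field) mpoly set \<Rightarrow> nat \<Rightarrow> nat" where
  "hilb I t = vector_space.dim kscale (hom_piece t :: ('v, 'a) mpoly set)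
              - vector_space.dim kscale (I \<inter> hom_piece t)"

definition hilb_series :: "('v, 'a::field) mpoly set \<Rightarrow> int fps" where
  "hilb_series I = Abs_fps (\<lambda>t. int (hilb I t))"

end

theory Submission
  imports Defs
begin

text \<open>Write the Hilbert function as \<open>a\<close> and its first difference as \<open>b\<close>. Since
  \<open>(1 - z)\<^sup>2 \<Sum> a\<^sub>t z\<^sup>t = h(z)\<close>, the \<open>b\<^sub>t\<close> are the partial sums of the
  \<open>h\<close>-vector, so positivity of the \<open>h\<close>-vector makes \<open>b\<close> nondecreasing; as \<open>b\<^sub>t = d\<close> for
  large \<open>t\<close>, we get \<open>b\<^sub>t \<le> d\<close> for all \<open>t\<close>. Summing, for large \<open>t\<close>
  \<open>d t + 1 - g = a\<^sub>t \<le> a\<^sub>0 + d t \<le> 1 + d t\<close>, because \<open>S\<^sub>0 = K\<close>. Hence \<open>g \<ge> 0\<close>.\<close>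

lemma fps_mult_one_minus_X_nth:
  fixes F :: "'a::comm_ring_1 fps"
  shows "(F * (1 - fps_X)) $ n = F $ n - (if n = 0 then 0 else F $ (n - 1))"
  by (simp add: algebra_simps)

lemma fps_nth_eq_sum_if_mult_one_minus_X:
  fixes F G :: "'a::comm_ring_1 fps"
  assumes "F * (1 - fps_X) = G"
  shows "F $ n = (\<Sum>i\<le>n. G $ i)"
proof (induction n)
  case 0
  then show ?case using fps_mult_one_minus_X_nth[of F 0] assms by simp
next
  case (Suc n)
  then show ?case using fps_mult_one_minus_X_nth[of F "Suc n"] assms by simp
qed

lemma fps_nth_mono_if_mult_one_minus_X_nonneg:
  fixes F G :: "'a::linordered_idom fps"
  assumes "F * (1 - fps_X) = G" and "\<And>i. G $ i \<ge> 0" and "m \<le> n"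
  shows "F $ m \<le> F $ n"
  using assms
  by (simp add: fps_nth_eq_sum_if_mult_one_minus_X sum_mono2)

lemma constant_term_bound_of_linear_growth:
  fixes A :: "'a::linordered_idom fps" and h :: "'a poly" and d g :: 'a
  assumes hvec: "A * (1 - fps_X)\<^sup>2 = fps_of_poly h"
    and h_nonneg: "\<And>i. coeff h i \<ge> 0"
    and linear: "\<forall>\<^sub>F t in sequentially. A $ t = d * of_nat t + 1 - g"
  shows "g \<ge> 1 - A $ 0"
proof -
  define B where "B = A * (1 - fps_X)"
  have A_sums: "A $ n = (\<Sum>j\<le>n. B $ j)" for n
    by (rule fps_nth_eq_sum_if_mult_one_minus_X) (simp add: B_def)
  have B_diff: "B * (1 - fps_X) = fps_of_poly h"
    using hvec by (simp add: B_def power2_eq_square mult.assoc)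
  obtain N where N: "\<And>t. t \<ge> N \<Longrightarrow> A $ t = d * of_nat t + 1 - g"
    using linear unfolding eventually_sequentially by blast
  have B_eventually: "B $ n = d" if "n > N" for n
  proof -
    have "A $ (n - 1) = d * of_nat n - d + 1 - g"
      using N[of "n - 1"] that by (simp add: of_nat_diff algebra_simps)
    moreover have "A $ n = d * of_nat n + 1 - g" using N[of n] that by simp
    ultimately show ?thesis using that by (simp add: B_def fps_mult_one_minus_X_nth)
  qed
  have B_le: "B $ j \<le> d" for j
  proof -
    have "B $ j \<le> B $ max j (Suc N)"
      by (rule fps_nth_mono_if_mult_one_minus_X_nonneg[OF B_diff]) (simp_all add: h_nonneg)
    thus ?thesis using B_eventually[of "max j (Suc N)"] by simp
  qed
  have "d * of_nat (Suc N) + 1 - g = A $ Suc N" using N by simp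
  also have "\<dots> = B $ 0 + (\<Sum>j\<in>{1..Suc N}. B $ j)"
    unfolding A_sums by (simp add: atMost_atLeast0 sum.atLeast_Suc_atMost)
  also have "\<dots> \<le> B $ 0 + (\<Sum>j\<in>{1..Suc N}. d)"
    by (intro add_left_mono sum_mono B_le)
  also have "\<dots> = A $ 0 + d * of_nat (Suc N)"
    using A_sums[of 0] by simp
  finally show ?thesis by (simp add: algebra_simps)
qed

lemma vector_space_kscale: "vector_space (kscale :: 'a::field \<Rightarrow> ('v, 'a) mpoly \<Rightarrow> _)"
  by unfold_locales
    (simp_all add: kscale_def distrib_left distrib_right single_add mult_single flip: mult.assoc)

lemma mdeg_eq_0D: "mdeg \<mu> = 0 \<Longrightarrow> \<mu> = 0"
  by (rule poly_mapping_eqI) (auto simp: mdeg_def sum_eq_0_iff in_keys_iff)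

lemma dim_hom_piece_0_le_1:
  "vector_space.dim kscale (hom_piece 0 :: ('v, 'a::field) mpoly set) \<le> 1"
proof -
  interpret vector_space "kscale :: 'a \<Rightarrow> ('v, 'a) mpoly \<Rightarrow> _" by (rule vector_space_kscale)
  have "hom_piece 0 \<subseteq> span {1 :: ('v, 'a) mpoly}"
  proof
    fix p :: "('v, 'a) mpoly"
    assume "p \<in> hom_piece 0"
    hence keys_0: "\<And>\<mu>. \<mu> \<in> Poly_Mapping.keys p \<Longrightarrow> \<mu> = 0"
      unfolding hom_piece_def using mdeg_eq_0D by blast
    have "p = Poly_Mapping.single 0 (Poly_Mapping.lookup p 0)"
      by (rule poly_mapping_eqI)
        (metis keys_0 in_keys_iff lookup_single_eq lookup_single_not_eq)
    also have "\<dots> = kscale (Poly_Mapping.lookup p 0) 1" by (simp add: kscale_def)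
    also have "\<dots> \<in> span {1}" by (intro span_scale span_base) simp
    finally show "p \<in> span {1}" .
  qed
  from dim_le_card[OF this] show ?thesis by simp
qed

lemma hilb_0_le_1: "hilb (I :: ('v, 'a::field) mpoly set) 0 \<le> 1"
  using dim_hom_piece_0_le_1[where 'v='v and 'a='a] unfolding hilb_def by linarith

theorem proposition1p4:
  fixes I :: "('v::finite, 'a::alg_closed_field) mpoly set"
    and h :: "int poly" and d g :: int
  assumes hom: "is_hom_ideal I"
    and sat: "saturated I"
    and hilb_poly: "\<forall>\<^sub>F t in sequentially. int (hilb I t) = d * int t + 1 - g"
    and dim1: "d > 0"
    and hvec: "hilb_series I * (1 - fps_X)\<^sup>2 = fps_of_poly h"
    and hpos: "\<forall>i\<le>Polynomial.degree h. Polynomial.coeff h i > 0"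
  shows "g \<ge> 0"
proof -
  have h_nonneg: "Polynomial.coeff h i \<ge> 0" for i
    using hpos by (cases "i \<le> Polynomial.degree h") (auto simp: coeff_eq_0 less_imp_le)
  have "g \<ge> 1 - hilb_series I $ 0"
    using hilb_poly
    by (intro constant_term_bound_of_linear_growth[OF hvec h_nonneg]) (simp add: hilb_series_def)
  moreover have "hilb_series I $ 0 \<le> 1"
    using hilb_0_le_1[of I] by (simp add: hilb_series_def)
  ultimately show ?thesis by simp
qed

end
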